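(* Let $\mathcal H$ be a (possibly infinite-dimensional) separable Hilbert space and let $\rho$ be a probability distribution on $(X,Y)\in\mathcal H\times\mathbb R$. Let $H=\mathbb E[X\otimes X]$ be the covariance operator, with largest eigenvalue $\lambda_{\max}$. Assume the noiseless model: there is $\theta_*\in\mathcal H$ (in particular $\|\theta_*\|_{\mathcal H}<\infty$) with $\langle\theta_*,X\rangle=Y$ $\rho$-almost surely. Assume the fourth moment condition: there is a finite constant $R\ge 0$ with $\mathbb E[\|X\|^2\,X\otimes X]\preccurlyeq R\,H$. Let $(x_t,y_t)_{t\ge0}$ be i.i.d. samples from $\rho$ and run constant step-size SGD $\theta_0=0$, $\theta_{t+1}=\theta_t-\gamma(\langle\theta_t,x_t\rangle-y_t)x_t$. Then for every $T\ge2$, with the step size $\gamma=(4R\ln T)^{-1}$, $$\mathbb E\,\mathcal R(\theta_T)\le 3R\|\theta_*\|_{\mathcal H}^2\,\frac{\ln T}{T},$$ where $\mathcal R(\theta)=\tfrac12\mathbb E_\rho(\langle\theta,X\rangle-Y)^2$ and the outer expectation is over the samples used by SGD.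
   Context: $\preccurlyeq$ denotes the Loewner order on self-adjoint operators. $\mathcal R(\theta)=\frac12(\theta-\theta_* )^\top H(\theta-\theta_* )$ in the noiseless model. *)

theory Defs
  imports "HOL-Probability.Probability"
begin

fun sgd :: "real \<Rightarrow> (nat \<Rightarrow> 'a::real_inner \<times> real) \<Rightarrow> nat \<Rightarrow> 'a" where
  "sgd \<gamma> \<omega> 0 = 0"
| "sgd \<gamma> \<omega> (Suc t) =
     sgd \<gamma> \<omega> t - (\<gamma> * (inner (sgd \<gamma> \<omega> t) (fst (\<omega> t)) - snd (\<omega> t))) *\<^sub>R fst (\<omega> t)"

definition risk :: "('a::real_inner \<times> real) measure \<Rightarrow> 'a \<Rightarrow> ennreal" where
  "risk \<rho> \<theta> = (1/2) * (\<integral>\<^sup>+ z. ennreal ((inner \<theta> (fst z) - snd z)^2) \<partial>\<rho>)"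

end

theory Submission
  imports Defs
begin

text \<open>
  Let \<open>f t\<close> be the expectation of \<open>(\<theta>\<^sub>t - \<theta>\<^sub>*)\<^sup>T H (\<theta>\<^sub>t - \<theta>\<^sub>*)\<close>, twice the expected risk of the
  \<open>t\<close>-th iterate. Expanding one SGD step, the noiseless model and the fourth moment condition give,
  for every anchor \<open>u\<close> that does not depend on the fresh sample,
  \<open>E |\<theta>\<^sub>t\<^sub>+\<^sub>1 - u|\<^sup>2 + \<gamma> f t \<le> E |\<theta>\<^sub>t - u|\<^sup>2 + \<gamma> E (u - \<theta>\<^sub>*)\<^sup>T H (u - \<theta>\<^sub>*) + \<gamma>\<^sup>2 R f t\<close>.
  Telescoping with \<open>u = \<theta>\<^sub>*\<close> bounds the average of \<open>f 0, \<dots>, f T\<close> by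
  \<open>|\<theta>\<^sub>*|\<^sup>2 / (\<gamma> (2 - \<gamma> R) (T + 1))\<close>. Telescoping from \<open>k\<close> to \<open>T\<close> with the random anchor
  \<open>u = \<theta>\<^sub>k\<close> gives \<open>(1 - \<gamma> R) (f k + \<dots> + f T) \<le> (T - k + 1) f k\<close>, so each suffix average exceeds
  the previous one by at most the factor \<open>1 + \<gamma> R / (T - k)\<close>. Hence \<open>f T\<close> is at most the full
  average times \<open>(1 + \<gamma> R) (1 + \<gamma> R / 2) \<cdots> (1 + \<gamma> R / T) \<le> (1 + \<gamma> R) T powr (\<gamma> R)\<close>, and
  for \<open>\<gamma> = 1 / (4 R ln T)\<close> the factor \<open>T powr (\<gamma> R)\<close> is \<open>exp (1/4)\<close>.
\<close>

section \<open>Elementary inequalities\<close>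

lemma telescoping_sum_le:
  fixes D c b :: "nat \<Rightarrow> 'a::ordered_comm_monoid_add"
  assumes "k \<le> n"
    and descent: "\<And>t. k \<le> t \<Longrightarrow> t < n \<Longrightarrow> D (Suc t) + c t \<le> D t + b t"
    and last: "c n \<le> D n + b n"
  shows "(\<Sum>t=k..n. c t) \<le> D k + (\<Sum>t=k..n. b t)"
proof -
  have partial: "D m + (\<Sum>t=k..<m. c t) \<le> D k + (\<Sum>t=k..<m. b t)" if "k \<le> m" "m \<le> n" for m
    using that
  proof (induction m rule: dec_induct)
    case base
    then show ?case by simp
  next
    case (step m)
    have "D (Suc m) + (\<Sum>t=k..<Suc m. c t) = (D (Suc m) + c m) + (\<Sum>t=k..<m. c t)"
      using step.hyps by (simp add: ac_simps)
    also have "\<dots> \<le> (D m + b m) + (\<Sum>t=k..<m. c t)"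
      using step.hyps step.prems by (intro add_right_mono descent) auto
    also have "\<dots> = (D m + (\<Sum>t=k..<m. c t)) + b m"
      by (simp add: ac_simps)
    also have "\<dots> \<le> (D k + (\<Sum>t=k..<m. b t)) + b m"
      using step by (intro add_right_mono) simp
    also have "\<dots> = D k + (\<Sum>t=k..<Suc m. b t)"
      using step.hyps by (simp add: ac_simps)
    finally show ?case .
  qed
  have "(\<Sum>t=k..n. c t) = c n + (\<Sum>t=k..<n. c t)"
    using \<open>k \<le> n\<close> by (simp add: atLeastLessThanSuc_atLeastAtMost[symmetric] ac_simps)
  also have "\<dots> \<le> (D n + b n) + (\<Sum>t=k..<n. c t)"
    using last by (rule add_right_mono)
  also have "\<dots> = (D n + (\<Sum>t=k..<n. c t)) + b n"
    by (simp add: ac_simps)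
  also have "\<dots> \<le> (D k + (\<Sum>t=k..<n. b t)) + b n"
    using partial[of n] \<open>k \<le> n\<close> by (intro add_right_mono) simp
  also have "\<dots> = D k + (\<Sum>t=k..n. b t)"
    using \<open>k \<le> n\<close> by (simp add: atLeastLessThanSuc_atLeastAtMost[symmetric] ac_simps)
  finally show ?thesis .
qed

lemma last_le_prod_times_average:
  fixes F :: "nat \<Rightarrow> real" and a :: real
  assumes "0 \<le> a"
    and suffix: "\<And>k. k \<le> T \<Longrightarrow> (1 - a) * (\<Sum>t=k..T. F t) \<le> (real (T - k) + 1) * F k"
  shows "F T \<le> (\<Prod>i<T. 1 + a / (real i + 1)) * ((\<Sum>t=0..T. F t) / (real T + 1))"
proof -
  define A where "A k = (\<Sum>t=k..T. F t) / (real (T - k) + 1)" for k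
  have A_Suc: "A (Suc k) \<le> (1 + a / real (T - k)) * A k" if "k < T" for k
  proof -
    define m where "m = real (T - k)"
    define S where "S = (\<Sum>t=k..T. F t)"
    have "m \<ge> 1" using that by (simp add: m_def)
    have "(S - F k) * (m + 1) \<le> (m + a) * S"
      using suffix[of k] that by (simp add: S_def m_def algebra_simps)
    then have "(S - F k) * (m + 1) / (m * (m + 1)) \<le> (m + a) * S / (m * (m + 1))"
      using \<open>m \<ge> 1\<close> by (intro divide_right_mono) auto
    moreover have "(S - F k) * (m + 1) / (m * (m + 1)) = (S - F k) / m"
      using \<open>m \<ge> 1\<close> by simp
    moreover have "(m + a) * S / (m * (m + 1)) = (1 + a / m) * (S / (m + 1))"
      using \<open>m \<ge> 1\<close> by (simp add: field_simps)
    ultimately have "(S - F k) / m \<le> (1 + a / m) * (S / (m + 1))"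
      by simp
    moreover have "S - F k = (\<Sum>t=Suc k..T. F t)"
      using that by (simp add: S_def sum.atLeast_Suc_atMost)
    moreover have "real (T - Suc k) + 1 = m"
      using that by (simp add: m_def of_nat_diff)
    ultimately show ?thesis by (simp add: A_def S_def m_def)
  qed
  have "A k \<le> (\<Prod>i<k. 1 + a / real (T - i)) * A 0" if "k \<le> T" for k
    using that
  proof (induction k)
    case 0
    then show ?case by simp
  next
    case (Suc k)
    have "A (Suc k) \<le> (1 + a / real (T - k)) * A k"
      using Suc.prems by (intro A_Suc) simp
    also have "\<dots> \<le> (1 + a / real (T - k)) * ((\<Prod>i<k. 1 + a / real (T - i)) * A 0)"
      using Suc \<open>0 \<le> a\<close> by (intro mult_left_mono) auto
    finally show ?case by (simp add: ac_simps)
  qed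
  from this[of T] have "F T \<le> (\<Prod>i<T. 1 + a / real (T - i)) * A 0"
    by (simp add: A_def)
  also have "(\<Prod>i<T. 1 + a / real (T - i)) = (\<Prod>i<T. 1 + a / (real i + 1))"
    using prod.nat_diff_reindex[of "\<lambda>i. 1 + a / (real i + 1)" T]
    by (simp add: of_nat_diff)
  finally show ?thesis by (simp add: A_def)
qed

lemma prod_one_plus_div_Suc_le_powr:
  fixes a :: real
  assumes "0 \<le> a" "1 \<le> n"
  shows "(\<Prod>i<n. 1 + a / (real i + 1)) \<le> (1 + a) * real n powr a"
  using \<open>1 \<le> n\<close>
proof (induction n rule: dec_induct)
  case base
  then show ?case by simp
next
  case (step n)
  have "real n \<ge> 1" using step.hyps by simp
  have "ln (real n / (real n + 1)) \<le> real n / (real n + 1) - 1"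
    using \<open>real n \<ge> 1\<close> by (intro ln_le_minus_one) auto
  then have "1 / (real n + 1) \<le> ln (real n + 1) - ln (real n)"
    using \<open>real n \<ge> 1\<close> by (simp add: ln_div field_simps)
  then have "a * (1 / (real n + 1)) \<le> a * (ln (real n + 1) - ln (real n))"
    using \<open>0 \<le> a\<close> by (rule mult_left_mono)
  then have "exp (a / (real n + 1)) \<le> exp (a * ln (real n + 1) - a * ln (real n))"
    by (simp add: algebra_simps)
  with exp_ge_add_one_self[of "a / (real n + 1)"]
  have "1 + a / (real n + 1) \<le> exp (a * ln (real n + 1) - a * ln (real n))"
    by linarith
  also have "\<dots> = real (Suc n) powr a / real n powr a"
    using \<open>real n \<ge> 1\<close> by (simp add: powr_def exp_diff ac_simps)
  finally have factor: "1 + a / (real n + 1) \<le> real (Suc n) powr a / real n powr a" .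
  have "(\<Prod>i<Suc n. 1 + a / (real i + 1)) = (\<Prod>i<n. 1 + a / (real i + 1)) * (1 + a / (real n + 1))"
    by simp
  also have "\<dots> \<le> ((1 + a) * real n powr a) * (real (Suc n) powr a / real n powr a)"
    using step.IH factor \<open>0 \<le> a\<close> by (intro mult_mono) auto
  also have "\<dots> = (1 + a) * real (Suc n) powr a"
    using \<open>real n \<ge> 1\<close> by simp
  finally show ?case .
qed

lemma ennreal_double_mult: "0 \<le> c \<Longrightarrow> ennreal (2 * c) * x = ennreal c * x + ennreal c * x"
  by (simp only: mult_2 ennreal_plus distrib_right)

lemma ln_ge_half: "2 \<le> T \<Longrightarrow> 1/2 \<le> ln (real T)"
  using exp_half_le2 by (subst ln_ge_iff) auto

lemma log_step_size_bound:
  fixes R d :: real and T :: nat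
  assumes "2 \<le> T" "0 < R" "0 \<le> d"
  defines "\<gamma> \<equiv> 1 / (4 * R * ln (real T))"
  shows "(1 + \<gamma> * R) * real T powr (\<gamma> * R) * d / (\<gamma> * (2 - \<gamma> * R) * (real T + 1)) / 2
           \<le> 3 * R * d * ln (real T) / real T"
proof -
  define L where "L = ln (real T)"
  define a where "a = \<gamma> * R"
  have "1/2 \<le> L"
    unfolding L_def using \<open>2 \<le> T\<close> by (rule ln_ge_half)
  have a_eq: "a = 1 / (4 * L)"
    using \<open>0 < R\<close> by (simp add: a_def \<gamma>_def L_def)
  have "0 \<le> a" "a \<le> 1/2"
    unfolding a_eq using \<open>1/2 \<le> L\<close> by (simp_all add: field_simps)
  have "real T powr a = exp (1/4)"
    using \<open>1/2 \<le> L\<close> \<open>2 \<le> T\<close> by (simp add: powr_def a_eq L_def)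
  also have "\<dots> \<le> 3/2"
    using exp_bound[of "1/4"] by (simp add: power2_eq_square)
  finally have "(1 + a) * real T powr a \<le> (2 - a) * (3/2)"
    using \<open>0 \<le> a\<close> \<open>a \<le> 1/2\<close> by (intro mult_mono) auto
  then have "(1 + a) * real T powr a / (2 - a) \<le> 3/2"
    using \<open>a \<le> 1/2\<close> by (simp add: field_simps)
  have "(1 + \<gamma> * R) * real T powr (\<gamma> * R) * d / (\<gamma> * (2 - \<gamma> * R) * (real T + 1)) / 2
      = (1 + a) * real T powr a / (2 - a) * d / (2 * \<gamma> * (real T + 1))"
    unfolding a_def[symmetric] by (simp add: field_simps)
  also have "\<dots> = (1 + a) * real T powr a / (2 - a) * (2 * R * L * d) / (real T + 1)"
    using \<open>0 < R\<close> \<open>1/2 \<le> L\<close> by (simp add: \<gamma>_def L_def field_simps)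
  also have "\<dots> \<le> 3/2 * (2 * R * L * d) / (real T + 1)"
    using \<open>(1 + a) * real T powr a / (2 - a) \<le> 3/2\<close> \<open>0 < R\<close> \<open>1/2 \<le> L\<close> \<open>0 \<le> d\<close>
    by (intro divide_right_mono mult_right_mono) auto
  also have "\<dots> \<le> 3 * R * d * L / real T"
    using \<open>0 < R\<close> \<open>1/2 \<le> L\<close> \<open>0 \<le> d\<close> \<open>2 \<le> T\<close> by (simp add: frac_le)
  finally show ?thesis by (simp add: L_def)
qed

section \<open>One SGD step\<close>

definition sgd_step :: "real \<Rightarrow> 'a::real_inner \<Rightarrow> 'a \<times> real \<Rightarrow> 'a" where
  "sgd_step \<gamma> \<theta> z = \<theta> - (\<gamma> * (inner \<theta> (fst z) - snd z)) *\<^sub>R fst z"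

lemma sgd_Suc: "sgd \<gamma> w (Suc t) = sgd_step \<gamma> (sgd \<gamma> w t) (w t)"
  by (simp add: sgd_step_def)

lemma sgd_zero_step_size: "sgd 0 w t = 0"
  by (induction t) auto

lemma sgd_cong: "(\<And>i. i < t \<Longrightarrow> w i = w' i) \<Longrightarrow> sgd \<gamma> w t = sgd \<gamma> w' t"
  by (induction t) auto

text \<open>\<open>cov_form \<rho> v\<close> is \<open>v\<^sup>T H v\<close> for the covariance operator \<open>H = E [X \<otimes> X]\<close>.\<close>

definition cov_form :: "('a::real_inner \<times> real) measure \<Rightarrow> 'a \<Rightarrow> ennreal" where
  "cov_form \<rho> v = (\<integral>\<^sup>+ z. ennreal ((inner (fst z) v)\<^sup>2) \<partial>\<rho>)"

lemma inner_sq_le_amgm: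
  fixes x w :: "'a::real_inner"
  assumes "0 < c"
  shows "(inner x w)\<^sup>2 \<le> (norm w)\<^sup>2 / (2 * c) * ((norm x)\<^sup>2 * (inner x w)\<^sup>2) + c / 2"
proof -
  have "(inner x w)\<^sup>2 \<le> (norm x)\<^sup>2 * (norm w)\<^sup>2"
    using power_mono[OF Cauchy_Schwarz_ineq2[of x w], of 2] by (simp add: power_mult_distrib)
  then have "(inner x w)\<^sup>2 * (inner x w)\<^sup>2 \<le> ((norm x)\<^sup>2 * (norm w)\<^sup>2) * (inner x w)\<^sup>2"
    by (rule mult_right_mono) simp
  then have "(inner x w)\<^sup>2 * (inner x w)\<^sup>2 \<le> (norm w)\<^sup>2 * ((norm x)\<^sup>2 * (inner x w)\<^sup>2)"
    by (simp only: mult_ac)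
  moreover have "2 * c * (inner x w)\<^sup>2 \<le> (inner x w)\<^sup>2 * (inner x w)\<^sup>2 + c * c"
    using sum_squares_ge_zero[of "(inner x w)\<^sup>2 - c" 0] by (simp add: algebra_simps power2_eq_square)
  ultimately show ?thesis
    using \<open>0 < c\<close> by (simp add: field_simps)
qed

lemma cov_form_zero[simp]: "cov_form \<rho> 0 = 0"
  by (simp add: cov_form_def)

lemma norm_sgd_step_diff_sq:
  fixes \<theta> u \<theta>star x :: "'a::real_inner"
  assumes "y = inner \<theta>star x"
  shows "(norm (sgd_step \<gamma> \<theta> (x, y) - u))\<^sup>2 + \<gamma> * (inner x (\<theta> - \<theta>star))\<^sup>2 + \<gamma> * (inner x (\<theta> - u))\<^sup>2
       = (norm (\<theta> - u))\<^sup>2 + \<gamma> * (inner x (u - \<theta>star))\<^sup>2 + \<gamma>\<^sup>2 * ((norm x)\<^sup>2 * (inner x (\<theta> - \<theta>star))\<^sup>2)"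
proof -
  define s p where "s = inner x (\<theta> - \<theta>star)" and "p = inner x (\<theta> - u)"
  have step_eq: "sgd_step \<gamma> \<theta> (x, y) - u = (\<theta> - u) - (\<gamma> * s) *\<^sub>R x"
    using assms by (simp add: sgd_step_def s_def inner_diff_right inner_commute)
  have norm_eq: "(norm (sgd_step \<gamma> \<theta> (x, y) - u))\<^sup>2
      = (norm (\<theta> - u))\<^sup>2 - 2 * \<gamma> * s * p + \<gamma>\<^sup>2 * s\<^sup>2 * (norm x)\<^sup>2"
    unfolding step_eq power2_norm_eq_inner p_def
    by (simp add: inner_diff_left inner_diff_right inner_commute power2_eq_square algebra_simps)
  have r_eq: "inner x (u - \<theta>star) = s - p"
    by (simp add: s_def p_def inner_diff_right)
  show ?thesis
    unfolding s_def[symmetric] p_def[symmetric] r_eq norm_eq by (simp add: power2_eq_square algebra_simps)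
qed

lemma nn_integral_PiM_fresh_coordinate:
  fixes M :: "'b measure" and X :: "('i \<Rightarrow> 'b) \<Rightarrow> 'c"
  assumes "prob_space M" "finite J" "t \<in> J"
    and X: "X \<in> measurable (PiM J (\<lambda>_. M)) N"
    and X_indep: "\<And>w z. X (w(t := z)) = X w"
    and h: "case_prod h \<in> borel_measurable (N \<Otimes>\<^sub>M M)"
  shows "(\<integral>\<^sup>+w. h (X w) (w t) \<partial>PiM J (\<lambda>_. M)) = (\<integral>\<^sup>+w. (\<integral>\<^sup>+z. h (X w) z \<partial>M) \<partial>PiM J (\<lambda>_. M))"
proof -
  interpret M: prob_space M by fact
  interpret product_sigma_finite "\<lambda>_::'i. M"
    by (simp add: product_sigma_finite_def M.sigma_finite_measure_axioms)
  define I where "I = J - {t}"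
  have J: "J = insert t I" "finite I" "t \<notin> I"
    using assms(2,3) by (auto simp: I_def)
  have "(\<integral>\<^sup>+w. h (X w) (w t) \<partial>PiM J (\<lambda>_. M)) = (\<integral>\<^sup>+w. (\<integral>\<^sup>+z. h (X w) z \<partial>M) \<partial>PiM I (\<lambda>_. M))"
    using measurable_compose[OF measurable_Pair[OF X measurable_component_singleton[OF \<open>t \<in> J\<close>]] h]
    unfolding J(1) by (subst product_nn_integral_insert[OF J(2,3)]) (auto simp: X_indep)
  also have "\<dots> = (\<integral>\<^sup>+w. (\<integral>\<^sup>+z. h (X w) z \<partial>M) \<partial>PiM J (\<lambda>_. M))"
    using measurable_compose[OF X M.borel_measurable_nn_integral[OF h]]
    unfolding J(1) by (subst product_nn_integral_insert[OF J(2,3)]) (auto simp: X_indep M.emeasure_space_1)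
  finally show ?thesis .
qed

locale noiseless_regression = prob_space \<rho>
  for \<rho> :: "('a::{real_inner, complete_space, second_countable_topology} \<times> real) measure" +
  fixes \<theta>star :: 'a and R :: real
  assumes sets_eq_borel: "sets \<rho> = sets borel"
    and cov_form_finite: "cov_form \<rho> v < \<infinity>"
    and noiseless: "AE z in \<rho>. inner \<theta>star (fst z) = snd z"
    and R_nonneg: "0 \<le> R"
    and fourth_moment:
      "(\<integral>\<^sup>+ z. ennreal ((norm (fst z))\<^sup>2 * (inner (fst z) v)\<^sup>2) \<partial>\<rho>) \<le> ennreal R * cov_form \<rho> v"
begin

lemma sets_eq_borel_prod[measurable_cong]: "sets \<rho> = sets (borel \<Otimes>\<^sub>M borel)"
  by (simp only: sets_eq_borel borel_prod)

lemma cov_form_measurable[measurable]: "cov_form \<rho> \<in> borel_measurable borel"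
  unfolding cov_form_def[abs_def] by (rule borel_measurable_nn_integral) measurable

lemma cov_form_le: "cov_form \<rho> w \<le> ennreal (R * (norm w)\<^sup>2)"
proof -
  obtain q where q: "cov_form \<rho> w = ennreal q" "0 \<le> q"
    using cov_form_finite[of w] by (cases "cov_form \<rho> w") auto
  define N where "N = R * (norm w)\<^sup>2"
  have "0 \<le> N"
    using R_nonneg by (simp add: N_def)
  have q_le: "q \<le> N / (2 * c) * q + c / 2" if "0 < c" for c
  proof -
    have "ennreal q \<le> (\<integral>\<^sup>+ z. ennreal ((norm w)\<^sup>2 / (2 * c)) * ennreal ((norm (fst z))\<^sup>2 * (inner (fst z) w)\<^sup>2)
                               + ennreal (c / 2) \<partial>\<rho>)"
      unfolding q(1)[symmetric] cov_form_def
    proof (intro nn_integral_mono)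
      fix z :: "'a \<times> real"
      have "(inner (fst z) w)\<^sup>2 \<le> (norm w)\<^sup>2 / (2 * c) * ((norm (fst z))\<^sup>2 * (inner (fst z) w)\<^sup>2) + c / 2"
        using \<open>0 < c\<close> by (rule inner_sq_le_amgm)
      then show "ennreal ((inner (fst z) w)\<^sup>2)
          \<le> ennreal ((norm w)\<^sup>2 / (2 * c)) * ennreal ((norm (fst z))\<^sup>2 * (inner (fst z) w)\<^sup>2) + ennreal (c / 2)"
        using \<open>0 < c\<close> by (simp add: ennreal_mult[symmetric] ennreal_plus[symmetric] del: ennreal_plus)
    qed
    also have "\<dots> = ennreal ((norm w)\<^sup>2 / (2 * c))
                    * (\<integral>\<^sup>+ z. ennreal ((norm (fst z))\<^sup>2 * (inner (fst z) w)\<^sup>2) \<partial>\<rho>) + ennreal (c / 2)"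
      by (simp add: nn_integral_add nn_integral_cmult emeasure_space_1)
    also have "\<dots> \<le> ennreal ((norm w)\<^sup>2 / (2 * c)) * (ennreal R * ennreal q) + ennreal (c / 2)"
      using fourth_moment[of w] unfolding q(1) by (intro add_right_mono mult_left_mono) auto
    also have "\<dots> = ennreal (N / (2 * c) * q + c / 2)"
      using \<open>0 < c\<close> q(2) R_nonneg by (simp add: N_def ennreal_mult[symmetric] ennreal_plus[symmetric] del: ennreal_plus)
    finally show ?thesis
      using \<open>0 < c\<close> q(2) \<open>0 \<le> N\<close> by (subst (asm) ennreal_le_iff) auto
  qed
  have "q \<le> N"
  proof (cases "N = 0")
    case True
    show ?thesis
    proof (rule ccontr)
      assume "\<not> q \<le> N"
      then show False
        using q_le[of q] True by simp
    qed
  next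
    case False
    then have "0 < N"
      using \<open>0 \<le> N\<close> by simp
    then show ?thesis
      using q_le[of N] by simp
  qed
  then show ?thesis
    using q by (simp add: N_def)
qed

lemma risk_eq: "risk \<rho> \<theta> = (1/2) * cov_form \<rho> (\<theta> - \<theta>star)"
proof -
  have "(\<integral>\<^sup>+ z. ennreal ((inner \<theta> (fst z) - snd z)\<^sup>2) \<partial>\<rho>) = cov_form \<rho> (\<theta> - \<theta>star)"
    unfolding cov_form_def
    by (rule nn_integral_cong_AE)
      (use noiseless in \<open>eventually_elim, simp add: inner_diff_right inner_commute\<close>)
  then show ?thesis
    by (simp add: risk_def)
qed

lemma sq_dist_sgd_step_bound:
  assumes "0 \<le> \<gamma>"
  shows "(\<integral>\<^sup>+ z. ennreal ((norm (sgd_step \<gamma> \<theta> z - u))\<^sup>2) \<partial>\<rho>)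
           + ennreal \<gamma> * cov_form \<rho> (\<theta> - \<theta>star) + ennreal \<gamma> * cov_form \<rho> (\<theta> - u)
         \<le> ennreal ((norm (\<theta> - u))\<^sup>2) + ennreal \<gamma> * cov_form \<rho> (u - \<theta>star)
           + ennreal (\<gamma>\<^sup>2 * R) * cov_form \<rho> (\<theta> - \<theta>star)"
proof -
  have "(\<integral>\<^sup>+ z. ennreal ((norm (sgd_step \<gamma> \<theta> z - u))\<^sup>2) \<partial>\<rho>)
          + ennreal \<gamma> * cov_form \<rho> (\<theta> - \<theta>star) + ennreal \<gamma> * cov_form \<rho> (\<theta> - u)
      = (\<integral>\<^sup>+ z. ennreal ((norm (sgd_step \<gamma> \<theta> z - u))\<^sup>2) + ennreal \<gamma> * ennreal ((inner (fst z) (\<theta> - \<theta>star))\<^sup>2)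
               + ennreal \<gamma> * ennreal ((inner (fst z) (\<theta> - u))\<^sup>2) \<partial>\<rho>)"
    unfolding cov_form_def sgd_step_def by (simp add: nn_integral_add nn_integral_cmult)
  also have "\<dots> = (\<integral>\<^sup>+ z. ennreal ((norm (\<theta> - u))\<^sup>2) + ennreal \<gamma> * ennreal ((inner (fst z) (u - \<theta>star))\<^sup>2)
               + ennreal (\<gamma>\<^sup>2) * ennreal ((norm (fst z))\<^sup>2 * (inner (fst z) (\<theta> - \<theta>star))\<^sup>2) \<partial>\<rho>)"
  proof (rule nn_integral_cong_AE)
    show "AE z in \<rho>. ennreal ((norm (sgd_step \<gamma> \<theta> z - u))\<^sup>2) + ennreal \<gamma> * ennreal ((inner (fst z) (\<theta> - \<theta>star))\<^sup>2)
               + ennreal \<gamma> * ennreal ((inner (fst z) (\<theta> - u))\<^sup>2)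
             = ennreal ((norm (\<theta> - u))\<^sup>2) + ennreal \<gamma> * ennreal ((inner (fst z) (u - \<theta>star))\<^sup>2)
               + ennreal (\<gamma>\<^sup>2) * ennreal ((norm (fst z))\<^sup>2 * (inner (fst z) (\<theta> - \<theta>star))\<^sup>2)"
      using noiseless
    proof eventually_elim
      case (elim z)
      from norm_sgd_step_diff_sq[of "snd z" \<theta>star "fst z" \<gamma> \<theta> u] elim
      show ?case
        using \<open>0 \<le> \<gamma>\<close> by (simp add: ennreal_mult[symmetric] ennreal_plus[symmetric] del: ennreal_plus)
    qed
  qed
  also have "\<dots> = ennreal ((norm (\<theta> - u))\<^sup>2) + ennreal \<gamma> * cov_form \<rho> (u - \<theta>star)
      + ennreal (\<gamma>\<^sup>2) * (\<integral>\<^sup>+ z. ennreal ((norm (fst z))\<^sup>2 * (inner (fst z) (\<theta> - \<theta>star))\<^sup>2) \<partial>\<rho>)"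
    unfolding cov_form_def by (simp add: nn_integral_add nn_integral_cmult emeasure_space_1)
  also have "\<dots> \<le> ennreal ((norm (\<theta> - u))\<^sup>2) + ennreal \<gamma> * cov_form \<rho> (u - \<theta>star)
      + ennreal (\<gamma>\<^sup>2) * (ennreal R * cov_form \<rho> (\<theta> - \<theta>star))"
    by (intro add_left_mono mult_left_mono fourth_moment) simp
  finally show ?thesis
    using R_nonneg by (simp add: ennreal_mult mult.assoc)
qed

lemma sq_dist_sgd_step_measurable[measurable]:
  "(\<lambda>p. \<integral>\<^sup>+ z. ennreal ((norm (sgd_step \<gamma> (fst p) z - snd p))\<^sup>2) \<partial>\<rho>) \<in> borel_measurable (borel \<Otimes>\<^sub>M borel)"
  unfolding sgd_step_def by (rule borel_measurable_nn_integral) measurable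

lemma nn_integral_sq_dist_sgd_step_bound:
  assumes "0 \<le> \<gamma>" and [measurable]: "\<Theta> \<in> borel_measurable M" "U \<in> borel_measurable M"
  shows "(\<integral>\<^sup>+ w. (\<integral>\<^sup>+ z. ennreal ((norm (sgd_step \<gamma> (\<Theta> w) z - U w))\<^sup>2) \<partial>\<rho>) \<partial>M)
           + ennreal \<gamma> * (\<integral>\<^sup>+ w. cov_form \<rho> (\<Theta> w - \<theta>star) \<partial>M)
           + ennreal \<gamma> * (\<integral>\<^sup>+ w. cov_form \<rho> (\<Theta> w - U w) \<partial>M)
         \<le> (\<integral>\<^sup>+ w. ennreal ((norm (\<Theta> w - U w))\<^sup>2) \<partial>M)
           + ennreal \<gamma> * (\<integral>\<^sup>+ w. cov_form \<rho> (U w - \<theta>star) \<partial>M)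
           + ennreal (\<gamma>\<^sup>2 * R) * (\<integral>\<^sup>+ w. cov_form \<rho> (\<Theta> w - \<theta>star) \<partial>M)"
proof -
  have [measurable]: "(\<lambda>w. \<integral>\<^sup>+ z. ennreal ((norm (sgd_step \<gamma> (\<Theta> w) z - U w))\<^sup>2) \<partial>\<rho>) \<in> borel_measurable M"
    using measurable_compose[OF measurable_Pair[of \<Theta> M borel U borel] sq_dist_sgd_step_measurable] by simp
  have "(\<integral>\<^sup>+ w. (\<integral>\<^sup>+ z. ennreal ((norm (sgd_step \<gamma> (\<Theta> w) z - U w))\<^sup>2) \<partial>\<rho>)
           + ennreal \<gamma> * cov_form \<rho> (\<Theta> w - \<theta>star) + ennreal \<gamma> * cov_form \<rho> (\<Theta> w - U w) \<partial>M)
      \<le> (\<integral>\<^sup>+ w. ennreal ((norm (\<Theta> w - U w))\<^sup>2) + ennreal \<gamma> * cov_form \<rho> (U w - \<theta>star)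
           + ennreal (\<gamma>\<^sup>2 * R) * cov_form \<rho> (\<Theta> w - \<theta>star) \<partial>M)"
    by (intro nn_integral_mono sq_dist_sgd_step_bound \<open>0 \<le> \<gamma>\<close>)
  then show ?thesis
    by (simp add: nn_integral_add nn_integral_cmult)
qed

end

section \<open>Expectations along the SGD path\<close>

locale sgd_run = noiseless_regression +
  fixes \<gamma> :: real and T :: nat
  assumes step_size_nonneg: "0 \<le> \<gamma>"
begin

abbreviation samples :: "(nat \<Rightarrow> 'a \<times> real) measure" where
  "samples \<equiv> PiM {..<T} (\<lambda>_. \<rho>)"

lemma sgd_measurable: "t \<le> T \<Longrightarrow> (\<lambda>w. sgd \<gamma> w t) \<in> borel_measurable samples"
proof (induction t)
  case 0
  then show ?case by simp
next
  case (Suc t)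
  have [measurable]: "(\<lambda>w. sgd \<gamma> w t) \<in> borel_measurable samples"
    using Suc by simp
  have "(\<lambda>w. w t) \<in> measurable samples \<rho>"
    using Suc.prems by (intro measurable_component_singleton) auto
  then have [measurable]: "(\<lambda>w. w t) \<in> measurable samples (borel \<Otimes>\<^sub>M borel)"
    by (simp add: measurable_cong_sets[OF refl sets_eq_borel_prod])
  show ?case
    unfolding sgd_Suc sgd_step_def by measurable
qed

definition mean_excess :: "nat \<Rightarrow> ennreal" where
  "mean_excess t = (\<integral>\<^sup>+ w. cov_form \<rho> (sgd \<gamma> w t - \<theta>star) \<partial>samples)"

definition mean_sq_dist :: "((nat \<Rightarrow> 'a \<times> real) \<Rightarrow> 'a) \<Rightarrow> nat \<Rightarrow> ennreal" where
  "mean_sq_dist U t = (\<integral>\<^sup>+ w. ennreal ((norm (sgd \<gamma> w t - U w))\<^sup>2) \<partial>samples)"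

lemma mean_sq_dist_anchor_descent:
  assumes "t < T" and [measurable]: "U \<in> borel_measurable samples"
    and U_indep: "\<And>w z. U (w(t := z)) = U w"
  shows "mean_sq_dist U (Suc t) + ennreal \<gamma> * mean_excess t
           + ennreal \<gamma> * (\<integral>\<^sup>+ w. cov_form \<rho> (sgd \<gamma> w t - U w) \<partial>samples)
         \<le> mean_sq_dist U t + ennreal \<gamma> * (\<integral>\<^sup>+ w. cov_form \<rho> (U w - \<theta>star) \<partial>samples)
           + ennreal (\<gamma>\<^sup>2 * R) * mean_excess t"
proof -
  have [measurable]: "(\<lambda>w. sgd \<gamma> w t) \<in> borel_measurable samples"
    using \<open>t < T\<close> by (intro sgd_measurable) simp
  have X: "(\<lambda>w. (sgd \<gamma> w t, U w)) \<in> measurable samples (borel \<Otimes>\<^sub>M borel)"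
    by measurable
  have X_indep: "(sgd \<gamma> (w(t := z)) t, U (w(t := z))) = (sgd \<gamma> w t, U w)" for w z
    by (auto simp: U_indep intro: sgd_cong)
  have h: "(\<lambda>(p, z). ennreal ((norm (sgd_step \<gamma> (fst p) z - snd p))\<^sup>2))
      \<in> borel_measurable ((borel \<Otimes>\<^sub>M borel) \<Otimes>\<^sub>M \<rho>)"
    unfolding sgd_step_def by measurable
  have "mean_sq_dist U (Suc t)
      = (\<integral>\<^sup>+ w. (\<integral>\<^sup>+ z. ennreal ((norm (sgd_step \<gamma> (sgd \<gamma> w t) z - U w))\<^sup>2) \<partial>\<rho>) \<partial>samples)"
    using nn_integral_PiM_fresh_coordinate[OF prob_space_axioms _ _ X X_indep h] \<open>t < T\<close>
    unfolding mean_sq_dist_def sgd_Suc by simp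
  then show ?thesis
    using nn_integral_sq_dist_sgd_step_bound[OF step_size_nonneg sgd_measurable assms(2)] \<open>t < T\<close>
    unfolding mean_excess_def mean_sq_dist_def by simp
qed

text \<open>At the horizon \<open>T\<close> no fresh sample is left; the step bound is then used without its
  next-iterate term.\<close>

lemma mean_excess_anchor_bound:
  assumes "t \<le> T" and [measurable]: "U \<in> borel_measurable samples"
  shows "ennreal \<gamma> * mean_excess t + ennreal \<gamma> * (\<integral>\<^sup>+ w. cov_form \<rho> (sgd \<gamma> w t - U w) \<partial>samples)
         \<le> mean_sq_dist U t + ennreal \<gamma> * (\<integral>\<^sup>+ w. cov_form \<rho> (U w - \<theta>star) \<partial>samples)
           + ennreal (\<gamma>\<^sup>2 * R) * mean_excess t"
  using nn_integral_sq_dist_sgd_step_bound[OF step_size_nonneg sgd_measurable[OF \<open>t \<le> T\<close>] assms(2)]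
  unfolding mean_sq_dist_def mean_excess_def
  by (rule order_trans[rotated]) (simp only: add.assoc, rule add_increasing, simp_all)

lemma mean_excess_le: "t \<le> T \<Longrightarrow> mean_excess t \<le> ennreal R * mean_sq_dist (\<lambda>_. \<theta>star) t"
  unfolding mean_excess_def mean_sq_dist_def
  using cov_form_le R_nonneg sgd_measurable[of t]
  by (subst nn_integral_cmult[symmetric]) (auto intro!: nn_integral_mono simp: ennreal_mult)

lemma mean_sq_dist_optimum_descent:
  assumes "t < T"
  shows "mean_sq_dist (\<lambda>_. \<theta>star) (Suc t) + ennreal (2 * \<gamma>) * mean_excess t
         \<le> mean_sq_dist (\<lambda>_. \<theta>star) t + ennreal (\<gamma>\<^sup>2 * R) * mean_excess t"
proof -
  have "ennreal (2 * \<gamma>) * mean_excess t = ennreal \<gamma> * mean_excess t + ennreal \<gamma> * mean_excess t"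
    using step_size_nonneg by (rule ennreal_double_mult)
  moreover have "(\<integral>\<^sup>+ w. cov_form \<rho> (sgd \<gamma> w t - \<theta>star) \<partial>samples) = mean_excess t"
    by (simp add: mean_excess_def)
  ultimately show ?thesis
    using mean_sq_dist_anchor_descent[OF assms, of "\<lambda>_. \<theta>star"] by (simp add: add.assoc)
qed

lemma mean_sq_dist_optimum_finite: "t \<le> T \<Longrightarrow> mean_sq_dist (\<lambda>_. \<theta>star) t < \<infinity>"
proof (induction t)
  case 0
  interpret samples: prob_space samples
    by (intro prob_space_PiM) (simp add: prob_space_axioms)
  show ?case
    by (simp add: mean_sq_dist_def samples.emeasure_space_1)
next
  case (Suc t)
  have "mean_sq_dist (\<lambda>_. \<theta>star) (Suc t)
      \<le> mean_sq_dist (\<lambda>_. \<theta>star) t + ennreal (\<gamma>\<^sup>2 * R) * mean_excess t"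
    using mean_sq_dist_optimum_descent[of t] Suc.prems by (auto intro: order_trans[rotated])
  also have "\<dots> \<le> mean_sq_dist (\<lambda>_. \<theta>star) t + ennreal (\<gamma>\<^sup>2 * R) * (ennreal R * mean_sq_dist (\<lambda>_. \<theta>star) t)"
    using mean_excess_le[of t] Suc.prems by (intro add_left_mono mult_left_mono) auto
  also have "\<dots> < \<infinity>"
    using Suc by (simp add: ennreal_mult_less_top)
  finally show ?case .
qed

definition excess :: "nat \<Rightarrow> real" where
  "excess t = enn2real (mean_excess t)"

lemma excess_nonneg: "0 \<le> excess t"
  by (simp add: excess_def)

lemma mean_excess_eq: "t \<le> T \<Longrightarrow> mean_excess t = ennreal (excess t)"
proof -
  assume "t \<le> T"
  have "ennreal R * mean_sq_dist (\<lambda>_. \<theta>star) t < \<infinity>"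
    using mean_sq_dist_optimum_finite[OF \<open>t \<le> T\<close>] by (simp add: ennreal_mult_less_top)
  then have "mean_excess t < \<infinity>"
    using mean_excess_le[OF \<open>t \<le> T\<close>] by (rule le_less_trans[rotated])
  then show ?thesis
    by (simp add: excess_def less_top)
qed

lemma sum_mean_excess:
  assumes "0 \<le> c" "n \<le> T"
  shows "(\<Sum>t=k..n. ennreal c * mean_excess t) = ennreal (c * (\<Sum>t=k..n. excess t))"
proof -
  have "(\<Sum>t=k..n. ennreal c * mean_excess t) = (\<Sum>t=k..n. ennreal (c * excess t))"
    using assms by (intro sum.cong refl) (simp add: mean_excess_eq ennreal_mult excess_nonneg)
  also have "\<dots> = ennreal (c * (\<Sum>t=k..n. excess t))"
    using assms by (simp add: sum_ennreal sum_distrib_left excess_nonneg)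
  finally show ?thesis .
qed

lemma suffix_sum_excess_le:
  assumes "0 < \<gamma>" "k \<le> T"
  shows "(1 - \<gamma> * R) * (\<Sum>t=k..T. excess t) \<le> (real (T - k) + 1) * excess k"
proof -
  let ?U = "\<lambda>w. sgd \<gamma> w k"
  have U_measurable: "?U \<in> borel_measurable samples"
    using \<open>k \<le> T\<close> by (rule sgd_measurable)
  have "(\<Sum>t=k..T. ennreal \<gamma> * mean_excess t)
      \<le> mean_sq_dist ?U k + (\<Sum>t=k..T. ennreal \<gamma> * mean_excess k + ennreal (\<gamma>\<^sup>2 * R) * mean_excess t)"
  proof (rule telescoping_sum_le[where D = "mean_sq_dist ?U", OF \<open>k \<le> T\<close>])
    fix t
    assume "k \<le> t" "t < T"
    have "mean_sq_dist ?U (Suc t) + ennreal \<gamma> * mean_excess t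
        \<le> mean_sq_dist ?U (Suc t) + ennreal \<gamma> * mean_excess t
           + ennreal \<gamma> * (\<integral>\<^sup>+ w. cov_form \<rho> (sgd \<gamma> w t - ?U w) \<partial>samples)"
      by simp
    also have "\<dots> \<le> mean_sq_dist ?U t + ennreal \<gamma> * mean_excess k + ennreal (\<gamma>\<^sup>2 * R) * mean_excess t"
    proof -
      have "sgd \<gamma> (w(t := z)) k = sgd \<gamma> w k" for w z
        using \<open>k \<le> t\<close> by (intro sgd_cong) auto
      from mean_sq_dist_anchor_descent[OF \<open>t < T\<close> U_measurable this]
      show ?thesis
        by (simp only: mean_excess_def)
    qed
    finally show "mean_sq_dist ?U (Suc t) + ennreal \<gamma> * mean_excess t
        \<le> mean_sq_dist ?U t + (ennreal \<gamma> * mean_excess k + ennreal (\<gamma>\<^sup>2 * R) * mean_excess t)"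
      by (simp add: add.assoc)
  next
    show "ennreal \<gamma> * mean_excess T
        \<le> mean_sq_dist ?U T + (ennreal \<gamma> * mean_excess k + ennreal (\<gamma>\<^sup>2 * R) * mean_excess T)"
    proof -
      have "ennreal \<gamma> * mean_excess T
          \<le> ennreal \<gamma> * mean_excess T + ennreal \<gamma> * (\<integral>\<^sup>+ w. cov_form \<rho> (sgd \<gamma> w T - ?U w) \<partial>samples)"
        by simp
      also have "\<dots> \<le> mean_sq_dist ?U T + ennreal \<gamma> * mean_excess k + ennreal (\<gamma>\<^sup>2 * R) * mean_excess T"
        using mean_excess_anchor_bound[OF order_refl U_measurable] by (simp only: mean_excess_def)
      finally show ?thesis
        by (simp add: add.assoc)
    qed
  qed
  also have "\<dots> = (\<Sum>t=k..T. ennreal (\<gamma> * excess k + \<gamma>\<^sup>2 * R * excess t))"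
    using \<open>k \<le> T\<close> \<open>0 < \<gamma>\<close> R_nonneg
    by (simp add: mean_sq_dist_def, intro sum.cong refl)
      (simp add: mean_excess_eq ennreal_mult excess_nonneg)
  also have "\<dots> = ennreal (\<Sum>t=k..T. \<gamma> * excess k + \<gamma>\<^sup>2 * R * excess t)"
    using \<open>0 < \<gamma>\<close> R_nonneg by (intro sum_ennreal) (simp add: excess_nonneg)
  also have "(\<Sum>t=k..T. \<gamma> * excess k + \<gamma>\<^sup>2 * R * excess t)
      = (real (T - k) + 1) * (\<gamma> * excess k) + \<gamma>\<^sup>2 * R * (\<Sum>t=k..T. excess t)"
    using \<open>k \<le> T\<close> by (simp add: sum.distrib sum_distrib_left of_nat_diff)
  finally have "\<gamma> * (\<Sum>t=k..T. excess t) \<le> (real (T - k) + 1) * (\<gamma> * excess k) + \<gamma>\<^sup>2 * R * (\<Sum>t=k..T. excess t)"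
    using \<open>0 < \<gamma>\<close> R_nonneg sum_mean_excess[of \<gamma> T k]
    by (simp add: ennreal_le_iff excess_nonneg sum_nonneg del: ennreal_plus)
  then have "\<gamma> * ((1 - \<gamma> * R) * (\<Sum>t=k..T. excess t)) \<le> \<gamma> * ((real (T - k) + 1) * excess k)"
    by (simp add: power2_eq_square algebra_simps)
  then show ?thesis
    using \<open>0 < \<gamma>\<close> by simp
qed

lemma sum_excess_le:
  assumes "0 < \<gamma>"
  shows "(2 - \<gamma> * R) * (\<Sum>t=0..T. excess t) \<le> (norm \<theta>star)\<^sup>2 / \<gamma>"
proof -
  interpret samples: prob_space samples
    by (intro prob_space_PiM) (simp add: prob_space_axioms)
  have "(\<Sum>t=0..T. ennreal (2 * \<gamma>) * mean_excess t)
      \<le> mean_sq_dist (\<lambda>_. \<theta>star) 0 + (\<Sum>t=0..T. ennreal (\<gamma>\<^sup>2 * R) * mean_excess t)"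
  proof (rule telescoping_sum_le[where D = "mean_sq_dist (\<lambda>_. \<theta>star)"])
    show "ennreal (2 * \<gamma>) * mean_excess T
        \<le> mean_sq_dist (\<lambda>_. \<theta>star) T + ennreal (\<gamma>\<^sup>2 * R) * mean_excess T"
      using mean_excess_anchor_bound[of T "\<lambda>_. \<theta>star"] ennreal_double_mult[of \<gamma>] step_size_nonneg
      by (simp add: mean_excess_def[symmetric])
  qed (use mean_sq_dist_optimum_descent in auto)
  also have "\<dots> = ennreal ((norm \<theta>star)\<^sup>2 + \<gamma>\<^sup>2 * R * (\<Sum>t=0..T. excess t))"
    using \<open>0 < \<gamma>\<close> R_nonneg sum_mean_excess[of "\<gamma>\<^sup>2 * R" T 0]
    by (simp add: mean_sq_dist_def samples.emeasure_space_1 excess_nonneg sum_nonneg)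
  finally have "2 * \<gamma> * (\<Sum>t=0..T. excess t) \<le> (norm \<theta>star)\<^sup>2 + \<gamma>\<^sup>2 * R * (\<Sum>t=0..T. excess t)"
    using \<open>0 < \<gamma>\<close> R_nonneg sum_mean_excess[of "2 * \<gamma>" T 0]
    by (simp add: ennreal_le_iff excess_nonneg sum_nonneg del: ennreal_plus)
  then have "\<gamma> * ((2 - \<gamma> * R) * (\<Sum>t=0..T. excess t)) \<le> (norm \<theta>star)\<^sup>2"
    by (simp add: power2_eq_square algebra_simps)
  then show ?thesis
    using \<open>0 < \<gamma>\<close> by (simp add: field_simps)
qed

lemma last_excess_le:
  assumes "0 < \<gamma>" "\<gamma> * R \<le> 1"
  shows "excess T \<le> (\<Prod>i<T. 1 + \<gamma> * R / (real i + 1)) * (norm \<theta>star)\<^sup>2 / (\<gamma> * (2 - \<gamma> * R) * (real T + 1))"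
proof -
  have "excess T \<le> (\<Prod>i<T. 1 + \<gamma> * R / (real i + 1)) * ((\<Sum>t=0..T. excess t) / (real T + 1))"
    using assms R_nonneg suffix_sum_excess_le by (intro last_le_prod_times_average) auto
  also have "\<dots> \<le> (\<Prod>i<T. 1 + \<gamma> * R / (real i + 1)) * ((norm \<theta>star)\<^sup>2 / (\<gamma> * (2 - \<gamma> * R)) / (real T + 1))"
  proof (intro mult_left_mono divide_right_mono)
    show "(\<Sum>t=0..T. excess t) \<le> (norm \<theta>star)\<^sup>2 / (\<gamma> * (2 - \<gamma> * R))"
      using sum_excess_le \<open>0 < \<gamma>\<close> \<open>\<gamma> * R \<le> 1\<close> by (simp add: field_simps)
  qed (use assms R_nonneg in \<open>auto intro: prod_nonneg\<close>)
  finally show ?thesis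
    by (simp add: field_simps)
qed

lemma nn_integral_risk_eq: "(\<integral>\<^sup>+ w. risk \<rho> (sgd \<gamma> w T) \<partial>samples) = ennreal (excess T / 2)"
proof -
  have "(\<integral>\<^sup>+ w. risk \<rho> (sgd \<gamma> w T) \<partial>samples) = (1/2) * mean_excess T"
    unfolding risk_eq mean_excess_def using sgd_measurable[of T]
    by (subst nn_integral_cmult) auto
  also have "\<dots> = ennreal (1/2) * ennreal (excess T)"
    using ennreal_divide_numeral[of 1 "num.Bit0 num.One"] by (simp add: mean_excess_eq)
  also have "\<dots> = ennreal (excess T / 2)"
    by (subst ennreal_mult'[symmetric]) simp_all
  finally show ?thesis .
qed

lemma nn_integral_risk_le:
  assumes "0 < \<gamma>" "\<gamma> * R \<le> 1" "1 \<le> T"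
  shows "(\<integral>\<^sup>+ w. risk \<rho> (sgd \<gamma> w T) \<partial>samples)
           \<le> ennreal ((1 + \<gamma> * R) * real T powr (\<gamma> * R) * (norm \<theta>star)\<^sup>2 / (\<gamma> * (2 - \<gamma> * R) * (real T + 1)) / 2)"
proof -
  have "(\<Prod>i<T. 1 + \<gamma> * R / (real i + 1)) \<le> (1 + \<gamma> * R) * real T powr (\<gamma> * R)"
    using assms R_nonneg by (intro prod_one_plus_div_Suc_le_powr) auto
  then have "excess T \<le> (1 + \<gamma> * R) * real T powr (\<gamma> * R) * (norm \<theta>star)\<^sup>2 / (\<gamma> * (2 - \<gamma> * R) * (real T + 1))"
    using last_excess_le[OF \<open>0 < \<gamma>\<close> \<open>\<gamma> * R \<le> 1\<close>] \<open>0 < \<gamma>\<close> \<open>\<gamma> * R \<le> 1\<close>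
    by (elim order_trans) (intro divide_right_mono mult_right_mono, auto)
  then show ?thesis
    unfolding nn_integral_risk_eq by (intro ennreal_leI divide_right_mono) simp_all
qed

end

theorem theorem1:
  fixes \<rho> :: "('a::{real_inner, complete_space, second_countable_topology} \<times> real) measure"
    and \<theta>star :: 'a and R :: real and T :: nat
  assumes prob: "prob_space \<rho>"
    and sets_rho: "sets \<rho> = sets borel"
    and cov_exists: "\<And>v. (\<integral>\<^sup>+ z. ennreal ((inner (fst z) v)^2) \<partial>\<rho>) < \<infinity>"
    and noiseless: "AE z in \<rho>. inner \<theta>star (fst z) = snd z"
    and R_nonneg: "R \<ge> 0"
    and fourth_moment: "\<And>v. (\<integral>\<^sup>+ z. ennreal ((norm (fst z))^2 * (inner (fst z) v)^2) \<partial>\<rho>)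
                              \<le> ennreal R * (\<integral>\<^sup>+ z. ennreal ((inner (fst z) v)^2) \<partial>\<rho>)"
    and T: "T \<ge> 2"
  shows "(\<integral>\<^sup>+ \<omega>. risk \<rho> (sgd (1 / (4 * R * ln (real T))) \<omega> T) \<partial>(PiM {..<T} (\<lambda>_. \<rho>)))
           \<le> ennreal (3 * R * (norm \<theta>star)^2 * ln (real T) / real T)"
proof (cases "R = 0")
  case True
  interpret noiseless_regression \<rho> \<theta>star R
    using prob sets_rho cov_exists noiseless R_nonneg fourth_moment
    by (intro noiseless_regression.intro noiseless_regression_axioms.intro) (auto simp: cov_form_def)
  \<comment> \<open>The step size is \<open>1 / 0 = 0\<close>, so SGD stays at the origin, whose risk vanishes.\<close>
  have "risk \<rho> 0 = 0"
    using risk_eq[of 0] cov_form_le[of "0 - \<theta>star"] True by simp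
  then show ?thesis
    using True by (simp add: sgd_zero_step_size)
next
  case False
  then have "0 < R"
    using R_nonneg by simp
  define \<gamma> where "\<gamma> = 1 / (4 * R * ln (real T))"
  have "1/2 \<le> ln (real T)"
    using T by (rule ln_ge_half)
  then have "0 < \<gamma>" "\<gamma> * R \<le> 1"
    using \<open>0 < R\<close> by (auto simp: \<gamma>_def field_simps)
  interpret sgd_run \<rho> \<theta>star R \<gamma> T
    using prob sets_rho cov_exists noiseless R_nonneg fourth_moment \<open>0 < \<gamma>\<close>
    by (intro sgd_run.intro noiseless_regression.intro noiseless_regression_axioms.intro sgd_run_axioms.intro)
      (auto simp: cov_form_def)
  have "(\<integral>\<^sup>+ w. risk \<rho> (sgd \<gamma> w T) \<partial>samples)
      \<le> ennreal ((1 + \<gamma> * R) * real T powr (\<gamma> * R) * (norm \<theta>star)\<^sup>2 / (\<gamma> * (2 - \<gamma> * R) * (real T + 1)) / 2)"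
    using \<open>0 < \<gamma>\<close> \<open>\<gamma> * R \<le> 1\<close> T by (intro nn_integral_risk_le) auto
  also have "\<dots> \<le> ennreal (3 * R * (norm \<theta>star)\<^sup>2 * ln (real T) / real T)"
    using log_step_size_bound[OF T \<open>0 < R\<close>, of "(norm \<theta>star)\<^sup>2"] unfolding \<gamma>_def by (simp add: ennreal_leI)
  finally show ?thesis
    unfolding \<gamma>_def .
qed

end
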